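(* Let $(V,\omega)$ be a finite-dimensional super vector space over $\mathbb{Q}$ with an odd constant symplectic form. Then \[ \Lambda_{\gamma,\nu}[V]:=(\mathbb{Q}_+[\gamma,\nu]\otimes V^* )\oplus(\mathbb{Q}[\gamma,\nu]\otimes\mathfrak{h}_{\geq 2})\oplus\Big(\mathbb{Q}[\gamma,\nu]\otimes\bigoplus_{i=2}^\infty \big[(\mathfrak{h}_{\geq 1})^{\otimes i}\big]_{S_i}\Big) \] is a differential graded Lie subalgebra of $\mathfrak{l}'$; in particular it is a differential graded Lie algebra with the differential induced by $d=\gamma\cdot\delta+\Delta$.
   Context: Work over $\mathbb{Q}$ with super vector spaces. $\mathfrak{h}=\mathfrak{h}[V]=\mathrm{DR}^0(V)=\bigoplus_{i\ge0}((V^* )^{\otimes i})_{\mathbb{Z}/i}$ is the space of noncommutative $0$-forms (cyclic words in $V^*$) with its odd bracket $\{-,-\}$ and odd cobracket $\Delta$ (given, in coordinates $x_1..x_n$ even, $\xi_1..\xi_n$ odd with $\omega=\sum dx_id\xi_i$ and $\langle x_i,\xi_j\rangle^{-1}=\langle\xi_j,x_i\rangle^{-1}=\delta_{ij}$, by: $\{a_1\cdots a_n,b_1\cdots b_m\}=\sum_{i,j}\pm\langle a_i,b_j\rangle^{-1}(z_{n-1}^{i-1}[a_1\cdots\widehat{a_i}\cdots a_n])(z_{m-1}^{j-1}[b_1\cdots\widehat{b_j}\cdots b_m])$, $z_k=(k\;k-1\cdots1)$, and $\Delta(a_1\cdots a_n)=\frac12\sum_{i<j}\pm\langle a_i,a_j\rangle^{-1}[1+(1\,2)][(a_{i+1}\cdots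 a_{j-1})\otimes(a_{j+1}\cdots a_na_1\cdots a_{i-1})]$, with Koszul signs). $\mathfrak{l}:=\mathbb{Q}[\gamma]\otimes S(\mathfrak{h})$ is the differential graded Lie algebra with the odd bracket obtained by extending $\{-,-\}$ to the symmetric algebra $S(\mathfrak{h})$ by the Leibniz rule (and $\mathbb{Q}[\gamma]$-linearly), and differential $d=\gamma\delta+\Delta$, where $\delta$ is the Chevalley–Eilenberg differential $\delta(g_1\cdots g_n)=\sum_{i<j}\pm\{g_i,g_j\}g_1\cdots\widehat{g_i}\cdots\widehat{g_j}\cdots g_n$ and $\Delta$ is the cobracket extended to $S(\mathfrak{h})$ as a derivation of the product. Notation: $\mathfrak{h}_{\ge n}:=\bigoplus_{i\ge n}((V^* )^{\otimes i})_{\mathbb{Z}/i}$, so $\mathfrak{h}=\mathbb{Q}\oplus\mathfrak{h}_{\ge1}$ and $\mathfrak{h}_{\ge1}=V^*\oplus\mathfrak{h}_{\ge2}$. Identifying $S(\mathbb{Q})$ with $\mathbb{Q}[\nu]$ (where $\nu$ is the constant $0$-form $1\in\mathfrak{h}$), $\mathfrak{l}=\mathbb{Q}[\gamma,\nu]\otimes S(\mathfrak{h}_{\ge1})$; the bracket and differential are $\mathbb{Q}[\gamma,\nu]$-linear. The summand $\mathbb{Q}[\gamma,\nu]=\mathbb{Q}[\gamma,\nu]\otimes S^0(\mathfrak{h}_{\ge1})$ is an ideal with trivial bracket, and $\mathfrak{l}':=\mathbb{Q}[\gamma,\nu]\otimes\bigoplus_{i\ge1}[(\mathfrak{h}_{\ge1})^{\otimes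 i}]_{S_i}$ is the quotient differential graded Lie algebra. $\mathbb{Q}_+[\gamma,\nu]$ is the ideal of polynomials vanishing at the origin. *)

theory Defs
  imports Complex_Main "HOL-Library.Poly_Mapping"
begin

text \<open>Darboux coordinates of V^* : x_i even (X i), xi_i odd (Xi i), i < n,
  with omega = sum dx_i dxi_i.\<close>

datatype letter = X nat | Xi nat

fun lidx :: "letter \<Rightarrow> nat" where
  "lidx (X i) = i" | "lidx (Xi i) = i"

fun lp :: "letter \<Rightarrow> bool" \<comment> \<open>parity: True = odd\<close> where
  "lp (X i) = False" | "lp (Xi i) = True"

fun pinv :: "letter \<Rightarrow> letter \<Rightarrow> rat" where
  "pinv (X i) (Xi j) = (if i = j then 1 else 0)"
| "pinv (Xi i) (X j) = (if i = j then 1 else 0)"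
| "pinv _ _ = 0"

type_synonym word = "letter list"

definition wp :: "word \<Rightarrow> bool" where
  "wp w = odd (length (filter lp w))"

text \<open>Koszul sign of rearranging a graded sequence with parities ps into the
  sequence whose k-th entry is the (pi ! k)-th entry of the original one.\<close>
definition koszul :: "bool list \<Rightarrow> nat list \<Rightarrow> rat" where
  "koszul ps \<pi> = (-1) ^ card {(a, b). a < b \<and> b < length \<pi> \<and> \<pi> ! b < \<pi> ! a
                                 \<and> ps ! (\<pi> ! a) \<and> ps ! (\<pi> ! b)}"

definition smul :: "rat \<Rightarrow> ('a \<Rightarrow>\<^sub>0 rat) \<Rightarrow> ('a \<Rightarrow>\<^sub>0 rat)" where
  "smul c x = Poly_Mapping.map (\<lambda>v. c * v) x"

definition lin :: "('a \<Rightarrow> ('b \<Rightarrow>\<^sub>0 rat)) \<Rightarrow> ('a \<Rightarrow>\<^sub>0 rat) \<Rightarrow> ('b \<Rightarrow>\<^sub>0 rat)" where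
  "lin f x = (\<Sum>k\<in>Poly_Mapping.keys x. smul (Poly_Mapping.lookup x k) (f k))"

definition lin2 :: "('a \<Rightarrow> 'b \<Rightarrow> ('c \<Rightarrow>\<^sub>0 rat)) \<Rightarrow> ('a \<Rightarrow>\<^sub>0 rat) \<Rightarrow> ('b \<Rightarrow>\<^sub>0 rat)
                     \<Rightarrow> ('c \<Rightarrow>\<^sub>0 rat)" where
  "lin2 f x y = (\<Sum>k\<in>Poly_Mapping.keys x. \<Sum>k'\<in>Poly_Mapping.keys y. smul (Poly_Mapping.lookup x k * Poly_Mapping.lookup y k') (f k k'))"

definition rm_idx :: "nat set \<Rightarrow> 'a list \<Rightarrow> 'a list" where
  "rm_idx S xs = map ((!) xs) (filter (\<lambda>t. t \<notin> S) [0..<length xs])"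

section \<open>Symmetrisation: h = cyclic coinvariants, S(h) = symmetric coinvariants\<close>

text \<open>Over Q, coinvariants are identified with invariants via the averaging
  projections below.  Raw monomials of l = Q[gamma] (x) S(h) are pairs
  (gamma-exponent, list of words); the empty word is the constant 0-form nu = 1.\<close>

definition symC :: "word \<Rightarrow> (word \<Rightarrow>\<^sub>0 rat)" where
  "symC w = (if w = [] then Poly_Mapping.single [] 1 else
     smul (1 / of_nat (length w))
       (\<Sum>k<length w. Poly_Mapping.single (rotate k w)
                         (koszul (map lp w) (rotate k [0..<length w]))))"

fun cycAll :: "word list \<Rightarrow> (word list \<Rightarrow>\<^sub>0 rat)" where
  "cycAll [] = Poly_Mapping.single [] 1"
| "cycAll (w # ws) = lin2 (\<lambda>u us. Poly_Mapping.single (u # us) 1) (symC w) (cycAll ws)"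

definition symS :: "word list \<Rightarrow> (word list \<Rightarrow>\<^sub>0 rat)" where
  "symS ws = smul (1 / of_nat (fact (length ws)))
     (\<Sum>\<pi>\<in>{\<pi>. distinct \<pi> \<and> set \<pi> = {0..<length ws}}.
        Poly_Mapping.single (map ((!) ws) \<pi>) (koszul (map wp ws) \<pi>))"

type_synonym mono = "nat \<times> word list"

fun symM :: "mono \<Rightarrow> (mono \<Rightarrow>\<^sub>0 rat)" where
  "symM (a, ws) = lin (\<lambda>us. Poly_Mapping.single (a, us) 1) (lin symS (cycAll ws))"

definition Sym :: "(mono \<Rightarrow>\<^sub>0 rat) \<Rightarrow> (mono \<Rightarrow>\<^sub>0 rat)" where
  "Sym x = lin symM x"

definition brw :: "word \<Rightarrow> word \<Rightarrow> (word \<Rightarrow>\<^sub>0 rat)" where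
  "brw a b = (let n = length a; m = length b in
     \<Sum>i<n. \<Sum>j<m.
       Poly_Mapping.single (drop (Suc i) a @ take i a @ drop (Suc j) b @ take j b)
         (koszul (map lp (a @ b))
            ([i, n + j] @ [Suc i..<n] @ [0..<i] @ map ((+) n) ([Suc j..<m] @ [0..<j]))
          * pinv (a ! i) (b ! j)))"

text \<open>Cobracket h -> S^2 h: the factor 1/2 [1 + (1 2)] is the symmetrisation
  of the two-factor tensor, performed by Sym at the end.\<close>
definition cobw :: "word \<Rightarrow> (word list \<Rightarrow>\<^sub>0 rat)" where
  "cobw w = (let n = length w in
     \<Sum>j<n. \<Sum>i<j.
       Poly_Mapping.single [take (j - Suc i) (drop (Suc i) w), drop (Suc j) w @ take i w]
         (koszul (map lp w) ([i, j] @ [Suc i..<j] @ [Suc j..<n] @ [0..<i])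
          * pinv (w ! i) (w ! j)))"

text \<open>Leibniz extension of the odd bracket (the odd bracket symbol is treated as an
  odd element for the Koszul sign).\<close>
fun brm :: "mono \<Rightarrow> mono \<Rightarrow> (mono \<Rightarrow>\<^sub>0 rat)" where
  "brm (a, gs) (b, hs) = (let k = length gs; l = length hs in
     \<Sum>i<k. \<Sum>j<l.
       lin (\<lambda>u. Poly_Mapping.single (a + b, u # rm_idx {i} gs @ rm_idx {j} hs)
              (koszul (map wp gs @ [True] @ map wp hs)
                 ([i, k, Suc (k + j)] @ rm_idx {i} [0..<k] @ map (\<lambda>t. Suc (k + t)) (rm_idx {j} [0..<l]))))
           (brw (gs ! i) (hs ! j)))"

text \<open>Chevalley--Eilenberg differential (times gamma).\<close>
fun deltam :: "mono \<Rightarrow> (mono \<Rightarrow>\<^sub>0 rat)" where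
  "deltam (a, gs) = (let k = length gs in
     \<Sum>j<k. \<Sum>i<j.
       lin (\<lambda>u. Poly_Mapping.single (Suc a, u # rm_idx {i, j} gs)
              (koszul (True # map wp gs)
                 ([Suc i, 0, Suc j] @ map Suc (rm_idx {i, j} [0..<k]))))
           (brw (gs ! i) (gs ! j)))"

text \<open>Cobracket extended as a derivation.\<close>
fun cobm :: "mono \<Rightarrow> (mono \<Rightarrow>\<^sub>0 rat)" where
  "cobm (a, gs) = (let k = length gs in
     \<Sum>i<k.
       lin (\<lambda>us. Poly_Mapping.single (a, us @ rm_idx {i} gs)
               (koszul (map wp gs) (i # rm_idx {i} [0..<k])))
           (cobw (gs ! i)))"

definition brl :: "(mono \<Rightarrow>\<^sub>0 rat) \<Rightarrow> (mono \<Rightarrow>\<^sub>0 rat) \<Rightarrow> (mono \<Rightarrow>\<^sub>0 rat)" where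
  "brl x y = Sym (lin2 brm x y)"

definition dl :: "(mono \<Rightarrow>\<^sub>0 rat) \<Rightarrow> (mono \<Rightarrow>\<^sub>0 rat)" where
  "dl x = Sym (lin (\<lambda>m. deltam m + cobm m) x)"

definition inL :: "nat \<Rightarrow> (mono \<Rightarrow>\<^sub>0 rat) \<Rightarrow> bool" where
  "inL n x \<longleftrightarrow> Sym x = x \<and>
     (\<forall>(a, ws)\<in>Poly_Mapping.keys x. \<forall>w\<in>set ws. \<forall>c\<in>set w. lidx c < n)"

text \<open>l' = l / Q[gamma,nu] is identified with the complementary span of monomials
  having at least one nonempty word; prjL is the quotient map.\<close>
definition prjL :: "(mono \<Rightarrow>\<^sub>0 rat) \<Rightarrow> (mono \<Rightarrow>\<^sub>0 rat)" where
  "prjL x = lin (\<lambda>(a, ws). if \<exists>w\<in>set ws. w \<noteq> [] then Poly_Mapping.single (a, ws) 1 else 0) x"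

text \<open>Monomial gamma^a nu^b g_1...g_m (g_i nonempty words) lies in Lambda iff
  m = 1, |g_1| = 1, a + b >= 1; or m = 1, |g_1| >= 2; or m >= 2.\<close>
definition allowedM :: "mono \<Rightarrow> bool" where
  "allowedM m = (case m of (a, ws) \<Rightarrow>
     (let ne = filter (\<lambda>w. w \<noteq> []) ws; b = length ws - length ne in
       (length ne = 1 \<and> (2 \<le> length (hd ne) \<or> 1 \<le> a + b)) \<or> 2 \<le> length ne))"

definition Lam :: "nat \<Rightarrow> (mono \<Rightarrow>\<^sub>0 rat) \<Rightarrow> bool" where
  "Lam n x \<longleftrightarrow> inL n x \<and> (\<forall>m\<in>Poly_Mapping.keys x. allowedM m)"

end

theory Submission
  imports Defs "HOL-Combinatorics.Multiset_Permutations" "HOL-Number_Theory.Cong"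
begin

text \<open>Symmetrisation only permutes the words of a monomial and rotates each word, up to Koszul
  signs; the signs form a cocycle, so the symmetrisation is an idempotent projection, and it keeps
  the multiset of words up to rotation, hence the occurring letters and word lengths.  In particular
  it commutes with the passage to l' and preserves membership in \<Lambda>, whose nonconstant monomials
  are all except the bare letters of V^*.  It therefore suffices to inspect the raw monomials
  produced by the bracket and by d: gamma delta raises the gamma-degree, the cobracket produces at
  least two words, and the bracket of two single words of lengths |g|, |h| \<ge> 2 has length
  |g| + |h| - 2 \<ge> 2; all letters are taken from the inputs.\<close>

section \<open>Linear maps on finitely supported functions\<close>

abbreviation sng :: "'a \<Rightarrow> rat \<Rightarrow> ('a \<Rightarrow>\<^sub>0 rat)" where
  "sng \<equiv> Poly_Mapping.single"

lemma lookup_smul [simp]: "Poly_Mapping.lookup (smul c x) k = c * Poly_Mapping.lookup x k"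
  by (simp add: smul_def map.rep_eq when_def)

lemma smul_add_left: "smul (c + d) x = smul c x + smul d x"
  by (rule poly_mapping_eqI) (simp add: lookup_add algebra_simps)

lemma smul_sum: "smul c (sum f A) = (\<Sum>a\<in>A. smul c (f a))"
  by (rule poly_mapping_eqI) (simp add: lookup_sum sum_distrib_left)

lemma smul_sum_left: "smul (sum f A) x = (\<Sum>a\<in>A. smul (f a) x)"
  by (rule poly_mapping_eqI) (simp add: lookup_sum sum_distrib_right)

lemma smul_smul [simp]: "smul c (smul d x) = smul (c * d) x"
  by (rule poly_mapping_eqI) simp

lemma smul_one [simp]: "smul 1 x = x"
  by (rule poly_mapping_eqI) simp

lemma smul_zero_left [simp]: "smul 0 x = 0"
  by (rule poly_mapping_eqI) simp

lemma smul_zero_right [simp]: "smul c 0 = 0"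
  by (rule poly_mapping_eqI) simp

lemma smul_single [simp]: "smul c (sng k d) = sng k (c * d)"
  by (rule poly_mapping_eqI) (simp add: lookup_single when_def)

lemma keys_smul: "Poly_Mapping.keys (smul c x) \<subseteq> Poly_Mapping.keys x"
  by (auto simp: in_keys_iff)

lemma smul_average_const:
  assumes "finite A" "A \<noteq> {}"
  shows "smul (1 / of_nat (card A)) (\<Sum>a\<in>A. x) = x"
  using assms by (simp add: card_gt_0_iff smul_sum_left[symmetric, of "\<lambda>_. 1", simplified])

lemma keys_sumD: "k \<in> Poly_Mapping.keys (sum f A) \<Longrightarrow> \<exists>a\<in>A. k \<in> Poly_Mapping.keys (f a)"
  using keys_sum[of f A] by blast

lemma lin_superset:
  assumes "finite K" "Poly_Mapping.keys x \<subseteq> K"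
  shows "lin f x = (\<Sum>k\<in>K. smul (Poly_Mapping.lookup x k) (f k))"
  unfolding lin_def
  by (rule sum.mono_neutral_left) (use assms in \<open>auto simp: in_keys_iff\<close>)

lemma lin_add: "lin f (x + y) = lin f x + lin f y"
proof -
  let ?K = "Poly_Mapping.keys x \<union> Poly_Mapping.keys y"
  have "lin f (x + y) = (\<Sum>k\<in>?K. smul (Poly_Mapping.lookup (x + y) k) (f k))"
    using keys_add[of x y] by (intro lin_superset) auto
  also have "\<dots> = (\<Sum>k\<in>?K. smul (Poly_Mapping.lookup x k) (f k))
                 + (\<Sum>k\<in>?K. smul (Poly_Mapping.lookup y k) (f k))"
    by (simp add: lookup_add smul_add_left sum.distrib)
  also have "\<dots> = lin f x + lin f y"
    by (subst (1 2) lin_superset[of ?K]) auto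
  finally show ?thesis .
qed

lemma lin_zero [simp]: "lin f 0 = 0"
  by (simp add: lin_def)

lemma lin_single [simp]: "lin f (sng k c) = smul c (f k)"
  by (subst lin_superset[of "{k}"]) auto

lemma lin_smul: "lin f (smul c x) = smul c (lin f x)"
  by (subst (1 2) lin_superset[of "Poly_Mapping.keys x"]) (auto simp: keys_smul smul_sum)

lemma lin_smul_fun: "lin (\<lambda>k. smul c (f k)) x = smul c (lin f x)"
  by (simp add: lin_def smul_sum mult.commute)

lemma lin_sum: "lin f (sum g A) = (\<Sum>a\<in>A. lin f (g a))"
  by (induction A rule: infinite_finite_induct) (auto simp: lin_add)

lemma lookup_lin:
  "Poly_Mapping.lookup (lin f x) m
     = (\<Sum>k\<in>Poly_Mapping.keys x. Poly_Mapping.lookup x k * Poly_Mapping.lookup (f k) m)"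
  by (simp add: lin_def lookup_sum)

lemma keys_lin: "Poly_Mapping.keys (lin f x) \<subseteq> (\<Union>k\<in>Poly_Mapping.keys x. Poly_Mapping.keys (f k))"
  unfolding lin_def using keys_sum keys_smul by fastforce

lemma lin_lin: "lin f (lin g x) = lin (\<lambda>k. lin f (g k)) x"
  by (simp add: lin_def[of g] lin_sum lin_smul) (simp add: lin_def)

lemma lin2_eq_lin: "lin2 f x y = lin (\<lambda>k. lin (f k) y) x"
  by (simp add: lin2_def lin_def smul_sum)

lemma lin_cong: "(\<And>k. k \<in> Poly_Mapping.keys x \<Longrightarrow> f k = g k) \<Longrightarrow> lin f x = lin g x"
  by (simp add: lin_def)

lemma lin_average_idem:
  fixes P :: "'k \<Rightarrow> ('k \<Rightarrow>\<^sub>0 rat)" and G :: "'g set"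
  assumes "finite G" "G \<noteq> {}"
    and P_eq: "P k = smul (1 / of_nat (card G)) (\<Sum>g\<in>G. sng (f g) (s g))"
    and P_equivariant: "\<And>g. g \<in> G \<Longrightarrow> P (f g) = smul (s g) (P k)"
    and sign_sq: "\<And>g. g \<in> G \<Longrightarrow> s g * s g = 1"
  shows "lin P (P k) = P k"
proof -
  have "lin P (P k) = smul (1 / of_nat (card G)) (\<Sum>g\<in>G. smul (s g) (P (f g)))"
    by (subst P_eq) (simp add: lin_smul lin_sum)
  also have "\<dots> = smul (1 / of_nat (card G)) (\<Sum>g\<in>G. P k)"
    by (intro arg_cong[where f = "smul _"] sum.cong) (simp_all add: P_equivariant sign_sq)
  finally show ?thesis using assms(1,2) by (simp add: smul_average_const)
qed

section \<open>Koszul signs\<close>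

definition inversions :: "nat \<Rightarrow> (nat \<Rightarrow> nat) \<Rightarrow> (nat \<Rightarrow> bool) \<Rightarrow> (nat \<times> nat) set" where
  "inversions n f q = {(a, b). a < b \<and> b < n \<and> f b < f a \<and> q (f a) \<and> q (f b)}"

lemma finite_inversions [simp]: "finite (inversions n f q)"
  by (rule finite_subset[of _ "{..<n} \<times> {..<n}"]) (auto simp: inversions_def)

lemma koszul_eq_inversions: "koszul ps \<pi> = (-1) ^ card (inversions (length \<pi>) ((!) \<pi>) ((!) ps))"
  by (simp add: koszul_def inversions_def)

lemma koszul_mult_self: "koszul ps \<pi> * koszul ps \<pi> = 1"
  by (simp add: koszul_def power_add[symmetric])

lemma inversions_cong:
  assumes "\<And>a. a < n \<Longrightarrow> f a = f' a" "\<And>a. a < n \<Longrightarrow> q (f a) = q' (f a)"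
  shows "inversions n f q = inversions n f' q'"
  using assms unfolding inversions_def by (auto; metis order.strict_trans)

lemma inversions_comp:
  fixes q :: "nat \<Rightarrow> bool"
  assumes g: "bij_betw g {..<n} {..<n}" and f: "inj_on f {..<n}"
  defines "J \<equiv> {(a, b). a < b \<and> b < n \<and> (min (g a) (g b), max (g a) (g b)) \<in> inversions n f q}"
  shows "inversions n (f \<circ> g) q = (inversions n g (q \<circ> f) - J) \<union> (J - inversions n g (q \<circ> f))"
proof (rule set_eqI)
  fix p :: "nat \<times> nat"
  obtain a b where p: "p = (a, b)" by fastforce
  show "p \<in> inversions n (f \<circ> g) q \<longleftrightarrow> p \<in> (inversions n g (q \<circ> f) - J) \<union> (J - inversions n g (q \<circ> f))"
  proof (cases "a < b \<and> b < n")
    case True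
    then have "g a \<noteq> g b" "g a < n" "g b < n"
      using g by (auto simp: bij_betw_def inj_on_def)
    moreover from this have "f (g a) \<noteq> f (g b)"
      using f by (auto simp: inj_on_def)
    ultimately show ?thesis
      using True by (auto simp: p J_def inversions_def min_def max_def)
  next
    case False
    then show ?thesis by (auto simp: p J_def inversions_def)
  qed
qed

lemma min_max_eq_iff:
  fixes u v u' v' :: "'a::linorder"
  assumes "u \<noteq> v"
  shows "(min u v, max u v) = (min u' v', max u' v') \<longleftrightarrow> (u = u' \<and> v = v') \<or> (u = v' \<and> v = u')"
  using assms by (auto simp: min_def max_def)

lemma inj_on_sorted_image_pairs:
  fixes g :: "nat \<Rightarrow> nat"
  assumes g: "inj_on g {..<n}"
  shows "inj_on (\<lambda>(a, b). (min (g a) (g b), max (g a) (g b))) {(a, b). a < b \<and> b < n}"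
proof (rule inj_onI)
  have g_inj: "a = b \<longleftrightarrow> g a = g b" if "a < n" "b < n" for a b
    using g that by (auto simp: inj_on_def)
  fix x y assume "x \<in> {(a, b). a < b \<and> b < n}" "y \<in> {(a, b). a < b \<and> b < n}"
    and eq: "(\<lambda>(a, b). (min (g a) (g b), max (g a) (g b))) x = (\<lambda>(a, b). (min (g a) (g b), max (g a) (g b))) y"
  then obtain a b a' b' where ab: "x = (a, b)" "y = (a', b')" "a < b" "b < n" "a' < b'" "b' < n"
    by auto
  then have "a < n" "a' < n"
    by auto
  with ab have "g a \<noteq> g b"
    using g_inj[of a b] by simp
  with eq ab have "(g a = g a' \<and> g b = g b') \<or> (g a = g b' \<and> g b = g a')"
    using min_max_eq_iff[of "g a" "g b" "g a'" "g b'"] by simp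
  then have "(a = a' \<and> b = b') \<or> (a = b' \<and> b = a')"
    using ab g_inj[of a a'] g_inj[of b b'] g_inj[of a b'] g_inj[of b a'] by simp
  then show "x = y"
    using ab by auto
qed

lemma bij_betw_sorted_image_inversions:
  assumes g: "bij_betw g {..<n} {..<n}"
  defines "h \<equiv> \<lambda>(a, b). (min (g a) (g b), max (g a) (g b))"
  shows "bij_betw h {(a, b). a < b \<and> b < n \<and> h (a, b) \<in> inversions n f q} (inversions n f q)"
    (is "bij_betw h ?J _")
proof (rule bij_betw_imageI)
  show "inj_on h ?J"
    unfolding h_def
    by (rule inj_on_subset[OF inj_on_sorted_image_pairs]) (use g in \<open>auto simp: bij_betw_def\<close>)
  show "h ` ?J = inversions n f q"
  proof (intro set_eqI iffI)
    fix x assume "x \<in> h ` ?J"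
    then show "x \<in> inversions n f q" by auto
  next
    fix x assume x: "x \<in> inversions n f q"
    then obtain c d where cd: "x = (c, d)" "c < d" "d < n"
      by (auto simp: inversions_def)
    then have "c \<in> g ` {..<n}" "d \<in> g ` {..<n}"
      using g by (auto simp: bij_betw_def)
    then obtain a b where ab: "a < n" "g a = c" "b < n" "g b = d"
      by blast
    then have "a \<noteq> b" using cd by auto
    then consider "a < b" | "b < a" by linarith
    then show "x \<in> h ` ?J"
    proof cases
      case 1
      then have "(a, b) \<in> ?J" "h (a, b) = x" using ab cd x by (auto simp: h_def)
      then show ?thesis by force
    next
      case 2
      then have "(b, a) \<in> ?J" "h (b, a) = x" using ab cd x by (auto simp: h_def)
      then show ?thesis by force
    qed
  qed
qed

lemma card_inversions_comp_parity:
  assumes g: "bij_betw g {..<n} {..<n}" and f: "inj_on f {..<n}"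
  shows "even (card (inversions n (f \<circ> g) q) + card (inversions n g (q \<circ> f)) + card (inversions n f q))"
proof -
  define B where "B = inversions n g (q \<circ> f)"
  define h where "h = (\<lambda>(a, b). (min (g a) (g b), max (g a) (g b)))"
  define J where "J = {(a, b). a < b \<and> b < n \<and> h (a, b) \<in> inversions n f q}"
  have "finite J"
    by (rule finite_subset[of _ "{..<n} \<times> {..<n}"]) (auto simp: J_def)
  have "card (inversions n f q) = card J"
    using bij_betw_same_card[OF bij_betw_sorted_image_inversions[OF g]] by (simp add: J_def h_def)
  moreover have "card (inversions n (f \<circ> g) q) = card (B - J) + card (J - B)"
  proof -
    have "inversions n (f \<circ> g) q = (B - J) \<union> (J - B)"
      using inversions_comp[OF g f] by (simp add: B_def J_def h_def)
    moreover have "card ((B - J) \<union> (J - B)) = card (B - J) + card (J - B)"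
      using \<open>finite J\<close> by (intro card_Un_disjoint) (auto simp: B_def)
    ultimately show ?thesis by simp
  qed
  moreover have "card (B - J) = card B - card (B \<inter> J)" "card (J - B) = card J - card (B \<inter> J)"
    using \<open>finite J\<close> by (auto simp: card_Diff_subset_Int B_def Int_commute)
  moreover have "card (B \<inter> J) \<le> card B" "card (B \<inter> J) \<le> card J"
    using \<open>finite J\<close> by (auto simp: B_def intro: card_mono)
  ultimately show ?thesis
    unfolding B_def[symmetric] by presburger
qed

lemma neg_one_power_even_sum:
  assumes "even (A + B + C)"
  shows "(-1::rat) ^ A = (-1) ^ B * (-1) ^ C"
proof -
  have "(-1::rat) ^ A = (-1) ^ (B + C)"
    using assms by (cases "even B"; cases "even C") (auto simp: minus_one_power_iff)
  then show ?thesis by (simp add: power_add)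
qed

lemma perm_list_length: "distinct \<pi> \<Longrightarrow> set \<pi> = {0..<n} \<Longrightarrow> length \<pi> = n"
  by (metis card_atLeastLessThan diff_zero distinct_card)

lemma koszul_comp:
  assumes \<pi>: "distinct \<pi>" "set \<pi> = {0..<n}" and \<sigma>: "distinct \<sigma>" "set \<sigma> = {0..<n}"
    and ps: "length ps = n"
  shows "koszul ps (map ((!) \<pi>) \<sigma>) = koszul ps \<pi> * koszul (map ((!) ps) \<pi>) \<sigma>"
proof -
  have len: "length \<pi> = n" "length \<sigma> = n"
    using \<pi> \<sigma> perm_list_length by auto
  have g: "bij_betw ((!) \<sigma>) {..<n} {..<n}"
    using bij_betw_nth[OF \<sigma>(1)] len \<sigma>(2) by (simp add: atLeast0LessThan)
  have f: "inj_on ((!) \<pi>) {..<n}"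
    using inj_on_nth[OF \<pi>(1)] len by simp
  have \<sigma>_less: "\<sigma> ! a < n" if "a < n" for a
    using \<sigma>(2) len that nth_mem by fastforce
  have "inversions (length (map ((!) \<pi>) \<sigma>)) ((!) (map ((!) \<pi>) \<sigma>)) ((!) ps)
      = inversions n ((!) \<pi> \<circ> (!) \<sigma>) ((!) ps)"
    unfolding length_map len by (rule inversions_cong) (use len in auto)
  moreover have "inversions (length \<sigma>) ((!) \<sigma>) ((!) (map ((!) ps) \<pi>))
      = inversions n ((!) \<sigma>) ((!) ps \<circ> (!) \<pi>)"
    unfolding len by (rule inversions_cong) (use len \<sigma>_less in auto)
  ultimately show ?thesis
    unfolding koszul_eq_inversions len
    using neg_one_power_even_sum[OF card_inversions_comp_parity[OF g f]] by (simp add: mult.commute)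
qed

section \<open>Cyclic symmetrisation\<close>

text \<open>The empty word, which symC fixes, gets period 1.\<close>
definition rot_period :: "word \<Rightarrow> nat" where
  "rot_period w = max 1 (length w)"

definition rot_sign :: "nat \<Rightarrow> word \<Rightarrow> rat" where
  "rot_sign k w = koszul (map lp w) (rotate k [0..<length w])"

lemma rot_period_pos [simp]: "0 < rot_period w"
  by (simp add: rot_period_def)

lemma rot_period_rotate [simp]: "rot_period (rotate k w) = rot_period w"
  by (simp add: rot_period_def)

lemma rotate_mod_rot_period: "length xs = length w \<Longrightarrow> rotate (k mod rot_period w) xs = rotate k xs"
  by (cases w) (simp_all add: rot_period_def, metis rotate_conv_mod)

lemma rot_sign_mod: "rot_sign (k mod rot_period w) w = rot_sign k w"
  unfolding rot_sign_def by (subst rotate_mod_rot_period) auto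

lemma rot_sign_mult_self: "rot_sign k w * rot_sign k w = 1"
  by (simp add: rot_sign_def koszul_mult_self)

lemma mset_rotate [simp]: "mset (rotate n xs) = mset xs"
proof (induction n)
  case (Suc n)
  have "mset (rotate1 ys) = mset ys" for ys :: "'a list"
    by (cases ys) auto
  with Suc show ?case
    by (simp add: rotate_Suc)
qed simp

lemma wp_rotate [simp]: "wp (rotate k w) = wp w"
proof -
  have "length (filter lp (rotate k w)) = length (filter lp w)"
    by (metis mset_filter mset_rotate size_mset)
  then show ?thesis
    by (simp add: wp_def)
qed

lemma rot_sign_add: "rot_sign a (rotate b w) * rot_sign b w = rot_sign (a + b) w"
proof -
  let ?n = "length w"
  have map_nth_rotate: "map ((!) xs) (rotate c [0..<length xs]) = rotate c xs" for c and xs :: "'a list"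
    by (metis map_nth rotate_map)
  have "map ((!) (rotate b [0..<?n])) (rotate a [0..<?n]) = rotate (a + b) [0..<?n]"
    using map_nth_rotate[of "rotate b [0..<?n]" a] by (simp add: rotate_rotate)
  moreover have "map ((!) (map lp w)) (rotate b [0..<?n]) = map lp (rotate b w)"
    using map_nth_rotate[of "map lp w" b] by (simp add: rotate_map)
  ultimately show ?thesis
    using koszul_comp[of "rotate b [0..<?n]" ?n "rotate a [0..<?n]" "map lp w"]
    by (simp add: rot_sign_def mult.commute)
qed

lemma symC_eq_average:
  "symC w = smul (1 / of_nat (rot_period w)) (\<Sum>k<rot_period w. sng (rotate k w) (rot_sign k w))"
proof (cases "w = []")
  case True
  then show ?thesis by (simp add: symC_def rot_period_def rot_sign_def koszul_def)
next
  case False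
  then have "rot_period w = length w"
    by (cases w) (auto simp: rot_period_def)
  with False show ?thesis
    by (simp add: symC_def rot_sign_def)
qed

lemma bij_betw_add_mod: "0 < (p::nat) \<Longrightarrow> bij_betw (\<lambda>j. (j + k) mod p) {..<p} {..<p}"
proof -
  assume "0 < p"
  have "inj_on (\<lambda>j. (j + k) mod p) {..<p}"
  proof (rule inj_onI)
    fix i j assume "i \<in> {..<p}" "j \<in> {..<p}" "(i + k) mod p = (j + k) mod p"
    then show "i = j"
      using cong_add_rcancel_nat[of i k j p] by (simp add: cong_def)
  qed
  moreover from this have "(\<lambda>j. (j + k) mod p) ` {..<p} = {..<p}"
    using \<open>0 < p\<close> by (intro endo_inj_surj) auto
  ultimately show ?thesis
    by (simp add: bij_betw_def)
qed

text \<open>The signs compose as a cocycle (rot_sign_add), so the shift j \<mapsto> (j + k) mod p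
  of the averaging index produces exactly the sign of the rotation by k.\<close>
lemma symC_rotate: "symC (rotate k w) = smul (rot_sign k w) (symC w)"
proof -
  let ?p = "rot_period w"
  let ?F = "\<lambda>j. sng (rotate j w) (rot_sign j w)"
  have summand: "sng (rotate j (rotate k w)) (rot_sign j (rotate k w))
      = smul (rot_sign k w) (?F ((j + k) mod ?p))" for j
  proof -
    have "rot_sign j (rotate k w) = rot_sign (j + k) w * rot_sign k w"
      by (simp add: rot_sign_add[symmetric] mult.assoc rot_sign_mult_self)
    moreover have "rotate j (rotate k w) = rotate ((j + k) mod ?p) w"
      by (simp add: rotate_rotate rotate_mod_rot_period)
    ultimately show ?thesis
      by (simp add: rot_sign_mod mult.commute)
  qed
  have "symC (rotate k w) = smul (1 / of_nat ?p) (\<Sum>j<?p. smul (rot_sign k w) (?F ((j + k) mod ?p)))"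
    by (simp add: symC_eq_average summand)
  also have "(\<Sum>j<?p. smul (rot_sign k w) (?F ((j + k) mod ?p))) = smul (rot_sign k w) (\<Sum>j<?p. ?F j)"
    unfolding smul_sum[symmetric]
    by (rule arg_cong[where f = "smul _"], rule sum.reindex_bij_betw) (simp add: bij_betw_add_mod)
  finally show ?thesis
    by (simp add: symC_eq_average mult.commute)
qed

definition rot_choices :: "word list \<Rightarrow> nat list set" where
  "rot_choices ws = {ks. length ks = length ws \<and> (\<forall>t<length ws. ks ! t < rot_period (ws ! t))}"

definition rotate_each :: "nat list \<Rightarrow> word list \<Rightarrow> word list" where
  "rotate_each ks ws = map (\<lambda>t. rotate (ks ! t) (ws ! t)) [0..<length ws]"

definition rotate_each_sign :: "nat list \<Rightarrow> word list \<Rightarrow> rat" where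
  "rotate_each_sign ks ws = (\<Prod>t<length ws. rot_sign (ks ! t) (ws ! t))"

lemma rot_choices_Nil [simp]: "rot_choices [] = {[]}"
  by (auto simp: rot_choices_def)

lemma rot_choices_Cons: "rot_choices (w # ws) = (\<lambda>(k, ks). k # ks) ` ({..<rot_period w} \<times> rot_choices ws)"
proof (intro set_eqI iffI)
  fix x assume "x \<in> rot_choices (w # ws)"
  then obtain k ks where "x = k # ks" "k < rot_period w" "ks \<in> rot_choices ws"
    by (cases x) (auto simp: rot_choices_def All_less_Suc2)
  then show "x \<in> (\<lambda>(k, ks). k # ks) ` ({..<rot_period w} \<times> rot_choices ws)"
    by force
next
  fix x assume "x \<in> (\<lambda>(k, ks). k # ks) ` ({..<rot_period w} \<times> rot_choices ws)"
  then show "x \<in> rot_choices (w # ws)"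
    by (auto simp: rot_choices_def All_less_Suc2)
qed

lemma finite_rot_choices [simp]: "finite (rot_choices ws)"
  by (induction ws) (auto simp: rot_choices_Cons)

lemma replicate_zero_in_rot_choices: "replicate (length ws) 0 \<in> rot_choices ws"
  by (simp add: rot_choices_def)

lemma card_rot_choices_Cons: "card (rot_choices (w # ws)) = rot_period w * card (rot_choices ws)"
proof -
  have "inj_on (\<lambda>(k, ks). k # ks) ({..<rot_period w} \<times> rot_choices ws)"
    by (auto simp: inj_on_def)
  then show ?thesis
    by (simp add: rot_choices_Cons card_image card_cartesian_product)
qed

lemma card_rot_choices: "card (rot_choices ws) = (\<Prod>t<length ws. rot_period (ws ! t))"
  by (induction ws) (simp_all add: card_rot_choices_Cons prod.lessThan_Suc_shift del: prod.lessThan_Suc)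

lemma rotate_each_Nil [simp]: "rotate_each ks [] = []"
  by (simp add: rotate_each_def)

lemma rotate_each_Cons [simp]: "rotate_each (k # ks) (w # ws) = rotate k w # rotate_each ks ws"
  by (simp add: rotate_each_def upt_conv_Cons map_Suc_upt[symmetric] del: upt_Suc)

lemma length_rotate_each [simp]: "length (rotate_each ks ws) = length ws"
  by (simp add: rotate_each_def)

lemma nth_rotate_each [simp]: "t < length ws \<Longrightarrow> rotate_each ks ws ! t = rotate (ks ! t) (ws ! t)"
  by (simp add: rotate_each_def)

lemma map_wp_rotate_each [simp]: "map wp (rotate_each ks ws) = map wp ws"
  by (intro nth_equalityI) auto

lemma map_mset_rotate_each [simp]: "map mset (rotate_each ks ws) = map mset ws"
  by (intro nth_equalityI) auto

lemma rotate_each_sign_Nil [simp]: "rotate_each_sign ks [] = 1"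
  by (simp add: rotate_each_sign_def)

lemma rotate_each_sign_Cons [simp]:
  "rotate_each_sign (k # ks) (w # ws) = rot_sign k w * rotate_each_sign ks ws"
  by (simp add: rotate_each_sign_def prod.lessThan_Suc_shift del: prod.lessThan_Suc)

lemma rotate_each_sign_mult_self: "rotate_each_sign ks ws * rotate_each_sign ks ws = 1"
  by (simp add: rotate_each_sign_def prod.distrib[symmetric] rot_sign_mult_self)

lemma cycAll_eq_average:
  "cycAll ws = smul (1 / of_nat (card (rot_choices ws)))
     (\<Sum>ks\<in>rot_choices ws. sng (rotate_each ks ws) (rotate_each_sign ks ws))"
proof (induction ws)
  case Nil
  then show ?case by simp
next
  case (Cons w ws)
  let ?C = "rot_choices ws"
  have inner: "lin (\<lambda>us. sng (u # us) 1) (cycAll ws)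
      = smul (1 / of_nat (card ?C)) (\<Sum>ks\<in>?C. sng (u # rotate_each ks ws) (rotate_each_sign ks ws))" for u
    by (simp add: Cons lin_smul lin_sum)
  have "cycAll (w # ws) = lin (\<lambda>u. lin (\<lambda>us. sng (u # us) 1) (cycAll ws)) (symC w)"
    by (simp add: lin2_eq_lin)
  also have "\<dots> = smul (1 / of_nat (rot_period w * card ?C))
      (\<Sum>k<rot_period w. \<Sum>ks\<in>?C. sng (rotate k w # rotate_each ks ws) (rot_sign k w * rotate_each_sign ks ws))"
    by (simp add: inner symC_eq_average lin_smul lin_sum smul_sum mult.commute)
  also have "(\<Sum>k<rot_period w. \<Sum>ks\<in>?C. sng (rotate k w # rotate_each ks ws) (rot_sign k w * rotate_each_sign ks ws))
      = (\<Sum>ks\<in>rot_choices (w # ws). sng (rotate_each ks (w # ws)) (rotate_each_sign ks (w # ws)))"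
  proof -
    have inj: "inj_on (\<lambda>(k, ks). k # ks) ({..<rot_period w} \<times> ?C)"
      by (auto simp: inj_on_def)
    show ?thesis
      unfolding rot_choices_Cons sum.reindex[OF inj] sum.cartesian_product
      by (intro sum.cong) auto
  qed
  finally show ?case
    by (simp add: card_rot_choices_Cons)
qed

lemma keys_cycAll: "us \<in> Poly_Mapping.keys (cycAll ws) \<Longrightarrow> \<exists>ks\<in>rot_choices ws. us = rotate_each ks ws"
  using keys_smul keys_sum by (fastforce simp: cycAll_eq_average split: if_splits)

lemma lin2_smul: "lin2 f (smul c x) (smul d y) = smul (c * d) (lin2 f x y)"
  by (simp add: lin2_eq_lin lin_smul lin_smul_fun mult.commute)

lemma cycAll_rotate_each:
  "length ks = length ws \<Longrightarrow> cycAll (rotate_each ks ws) = smul (rotate_each_sign ks ws) (cycAll ws)"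
proof (induction ws arbitrary: ks)
  case (Cons w ws)
  then obtain k ks' where "ks = k # ks'" "length ks' = length ws"
    by (cases ks) auto
  with Cons.IH show ?case
    by (simp add: symC_rotate lin2_smul)
qed simp

definition perm_lists :: "nat \<Rightarrow> nat list set" where
  "perm_lists K = {\<pi>. distinct \<pi> \<and> set \<pi> = {0..<K}}"

definition reorder :: "nat list \<Rightarrow> 'a list \<Rightarrow> 'a list" where
  "reorder \<pi> xs = map ((!) xs) \<pi>"

lemma perm_lists_eq: "perm_lists K = permutations_of_set {0..<K}"
  by (auto simp: perm_lists_def permutations_of_set_def)

lemma finite_perm_lists [simp]: "finite (perm_lists K)"
  by (simp add: perm_lists_eq)

lemma card_perm_lists: "card (perm_lists K) = fact K"
  by (simp add: perm_lists_eq)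

lemma upt_in_perm_lists: "[0..<K] \<in> perm_lists K"
  by (simp add: perm_lists_def)

lemma length_perm_lists: "\<pi> \<in> perm_lists K \<Longrightarrow> length \<pi> = K"
  by (simp add: perm_lists_def perm_list_length)

lemma nth_perm_lists_less: "\<pi> \<in> perm_lists K \<Longrightarrow> t < K \<Longrightarrow> \<pi> ! t < K"
  using length_perm_lists[of \<pi> K] nth_mem[of t \<pi>] by (auto simp: perm_lists_def)

lemma bij_betw_nth_perm_lists: "\<pi> \<in> perm_lists K \<Longrightarrow> bij_betw ((!) \<pi>) {..<K} {..<K}"
  using bij_betw_nth[of \<pi> "{..<K}" "{..<K}"] length_perm_lists[of \<pi> K]
  by (auto simp: perm_lists_def lessThan_atLeast0)

lemma prod_perm_lists_reindex: "\<pi> \<in> perm_lists K \<Longrightarrow> (\<Prod>t<K. f (\<pi> ! t)) = (\<Prod>j<K. f j)"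
  using prod.reindex_bij_betw[OF bij_betw_nth_perm_lists] by blast

lemma length_reorder [simp]: "length (reorder \<pi> xs) = length \<pi>"
  by (simp add: reorder_def)

lemma nth_reorder [simp]: "t < length \<pi> \<Longrightarrow> reorder \<pi> xs ! t = xs ! (\<pi> ! t)"
  by (simp add: reorder_def)

lemma reorder_map: "\<pi> \<in> perm_lists (length xs) \<Longrightarrow> reorder \<pi> (map f xs) = map f (reorder \<pi> xs)"
  using nth_perm_lists_less[of \<pi> "length xs"] length_perm_lists[of \<pi> "length xs"]
  by (intro nth_equalityI) auto

lemma reorder_reorder:
  "\<sigma> \<in> perm_lists (length \<pi>) \<Longrightarrow> reorder \<sigma> (reorder \<pi> xs) = reorder (reorder \<sigma> \<pi>) xs"
  using nth_perm_lists_less[of \<sigma> "length \<pi>"] length_perm_lists[of \<sigma> "length \<pi>"]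
  by (intro nth_equalityI) auto

lemma mset_reorder: "\<pi> \<in> perm_lists (length xs) \<Longrightarrow> mset (reorder \<pi> xs) = mset xs"
proof -
  assume "\<pi> \<in> perm_lists (length xs)"
  then have "mset \<pi> = mset [0..<length xs]"
    using mset_set_set[of \<pi>] by (simp add: perm_lists_def)
  then have "mset (reorder \<pi> xs) = mset (map ((!) xs) [0..<length xs])"
    by (simp add: reorder_def)
  then show ?thesis
    by (simp add: map_nth)
qed

lemma mset_map_reorder: "\<pi> \<in> perm_lists (length xs) \<Longrightarrow> mset (map f (reorder \<pi> xs)) = mset (map f xs)"
  by (simp add: mset_reorder)

lemma reorder_in_perm_lists:
  assumes \<pi>: "\<pi> \<in> perm_lists K" and \<sigma>: "\<sigma> \<in> perm_lists K"
  shows "reorder \<sigma> \<pi> \<in> perm_lists K"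
proof -
  have "inj_on ((!) \<pi>) (set \<sigma>)"
    using \<pi> \<sigma> length_perm_lists[OF \<pi>] by (auto simp: perm_lists_def intro!: inj_on_nth)
  then have "distinct (reorder \<sigma> \<pi>)"
    using \<sigma> by (simp add: reorder_def distinct_map perm_lists_def)
  moreover have "set (reorder \<sigma> \<pi>) = {0..<K}"
    using \<sigma> bij_betw_imp_surj_on[OF bij_betw_nth_perm_lists[OF \<pi>]]
    by (auto simp: reorder_def perm_lists_def lessThan_atLeast0)
  ultimately show ?thesis
    by (simp add: perm_lists_def)
qed

lemma bij_betw_reorder_perm_lists:
  assumes \<pi>: "\<pi> \<in> perm_lists K"
  shows "bij_betw (\<lambda>\<sigma>. reorder \<sigma> \<pi>) (perm_lists K) (perm_lists K)"
proof -
  have inj: "inj_on ((!) \<pi>) {0..<K}"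
    using \<pi> length_perm_lists[OF \<pi>] by (auto simp: perm_lists_def intro!: inj_on_nth)
  have "inj_on (\<lambda>\<sigma>. reorder \<sigma> \<pi>) (perm_lists K)"
  proof (rule inj_onI)
    fix \<sigma> \<sigma>' assume "\<sigma> \<in> perm_lists K" "\<sigma>' \<in> perm_lists K" "reorder \<sigma> \<pi> = reorder \<sigma>' \<pi>"
    with inj show "\<sigma> = \<sigma>'"
      by (simp add: perm_lists_def reorder_def inj_on_map_eq_map)
  qed
  moreover from this have "(\<lambda>\<sigma>. reorder \<sigma> \<pi>) ` perm_lists K = perm_lists K"
    using \<pi> by (intro endo_inj_surj) (auto intro: reorder_in_perm_lists)
  ultimately show ?thesis
    by (simp add: bij_betw_def)
qed

lemma koszul_reorder:
  assumes "\<pi> \<in> perm_lists (length ps)" "\<sigma> \<in> perm_lists (length ps)"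
  shows "koszul ps (reorder \<sigma> \<pi>) = koszul ps \<pi> * koszul (reorder \<pi> ps) \<sigma>"
  using koszul_comp[of \<pi> "length ps" \<sigma> ps] assms by (simp add: perm_lists_def reorder_def)

lemma symS_eq_average:
  "symS us = smul (1 / of_nat (card (perm_lists (length us))))
     (\<Sum>\<pi>\<in>perm_lists (length us). sng (reorder \<pi> us) (koszul (map wp us) \<pi>))"
  by (simp add: symS_def perm_lists_def reorder_def card_perm_lists[unfolded perm_lists_def])

lemma symS_reorder:
  assumes \<pi>: "\<pi> \<in> perm_lists (length us)"
  shows "symS (reorder \<pi> us) = smul (koszul (map wp us) \<pi>) (symS us)"
proof -
  let ?K = "length us" and ?\<kappa> = "koszul (map wp us) \<pi>"
  let ?F = "\<lambda>\<sigma>. sng (reorder \<sigma> us) (koszul (map wp us) \<sigma>)"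
  have len: "length \<pi> = ?K"
    using length_perm_lists[OF \<pi>] .
  have summand: "sng (reorder \<sigma> (reorder \<pi> us)) (koszul (map wp (reorder \<pi> us)) \<sigma>)
      = smul ?\<kappa> (?F (reorder \<sigma> \<pi>))" if \<sigma>: "\<sigma> \<in> perm_lists ?K" for \<sigma>
  proof -
    have "koszul (map wp us) (reorder \<sigma> \<pi>) = ?\<kappa> * koszul (map wp (reorder \<pi> us)) \<sigma>"
      using koszul_reorder[of \<pi> "map wp us" \<sigma>] \<pi> \<sigma> by (simp add: reorder_map)
    then have "?\<kappa> * koszul (map wp us) (reorder \<sigma> \<pi>) = koszul (map wp (reorder \<pi> us)) \<sigma>"
      by (simp add: mult.assoc[symmetric] koszul_mult_self)
    then show ?thesis
      using \<sigma> len by (simp add: reorder_reorder)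
  qed
  have "symS (reorder \<pi> us)
      = smul (1 / of_nat (card (perm_lists ?K))) (\<Sum>\<sigma>\<in>perm_lists ?K. smul ?\<kappa> (?F (reorder \<sigma> \<pi>)))"
    by (simp add: symS_eq_average len summand)
  also have "(\<Sum>\<sigma>\<in>perm_lists ?K. smul ?\<kappa> (?F (reorder \<sigma> \<pi>))) = smul ?\<kappa> (\<Sum>\<sigma>\<in>perm_lists ?K. ?F \<sigma>)"
    unfolding smul_sum[symmetric]
    by (rule arg_cong[where f = "smul _"], rule sum.reindex_bij_betw) (rule bij_betw_reorder_perm_lists[OF \<pi>])
  finally show ?thesis
    by (simp add: symS_eq_average mult.commute)
qed

lemma rotate_each_reorder:
  "\<pi> \<in> perm_lists (length ws) \<Longrightarrow> reorder \<pi> (rotate_each ks ws) = rotate_each (reorder \<pi> ks) (reorder \<pi> ws)"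
  using length_perm_lists[of \<pi> "length ws"] nth_perm_lists_less[of \<pi> "length ws"]
  by (intro nth_equalityI) auto

lemma rotate_each_sign_reorder:
  "\<pi> \<in> perm_lists (length ws) \<Longrightarrow> rotate_each_sign (reorder \<pi> ks) (reorder \<pi> ws) = rotate_each_sign ks ws"
  using length_perm_lists[of \<pi> "length ws"]
    prod_perm_lists_reindex[of \<pi> "length ws" "\<lambda>j. rot_sign (ks ! j) (ws ! j)"]
  by (simp add: rotate_each_sign_def)

lemma card_rot_choices_reorder:
  "\<pi> \<in> perm_lists (length ws) \<Longrightarrow> card (rot_choices (reorder \<pi> ws)) = card (rot_choices ws)"
  using length_perm_lists[of \<pi> "length ws"]
    prod_perm_lists_reindex[of \<pi> "length ws" "\<lambda>j. rot_period (ws ! j)"]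
  by (simp add: card_rot_choices)

lemma bij_betw_reorder_rot_choices:
  assumes \<pi>: "\<pi> \<in> perm_lists (length ws)"
  shows "bij_betw (reorder \<pi>) (rot_choices ws) (rot_choices (reorder \<pi> ws))"
proof -
  let ?K = "length ws"
  have len: "length \<pi> = ?K"
    using length_perm_lists[OF \<pi>] .
  have "inj_on (reorder \<pi>) (rot_choices ws)"
  proof (rule inj_onI)
    fix x y assume x: "x \<in> rot_choices ws" and y: "y \<in> rot_choices ws" and eq: "reorder \<pi> x = reorder \<pi> y"
    show "x = y"
    proof (rule nth_equalityI)
      show "length x = length y"
        using x y by (simp add: rot_choices_def)
      fix j assume "j < length x"
      then have "j \<in> (!) \<pi> ` {..<?K}"
        using x bij_betw_imp_surj_on[OF bij_betw_nth_perm_lists[OF \<pi>]] by (simp add: rot_choices_def)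
      then obtain t where "t < ?K" "\<pi> ! t = j"
        by blast
      with eq len show "x ! j = y ! j"
        by (metis nth_reorder)
    qed
  qed
  moreover have "reorder \<pi> ` rot_choices ws \<subseteq> rot_choices (reorder \<pi> ws)"
    using len nth_perm_lists_less[OF \<pi>] by (auto simp: rot_choices_def)
  ultimately show ?thesis
    using card_rot_choices_reorder[OF \<pi>]
    by (metis bij_betw_def card_image card_subset_eq finite_rot_choices)
qed

lemma cycAll_reorder:
  assumes \<pi>: "\<pi> \<in> perm_lists (length ws)"
  shows "cycAll (reorder \<pi> ws) = lin (\<lambda>us. sng (reorder \<pi> us) 1) (cycAll ws)"
proof -
  let ?C = "rot_choices ws"
  have "lin (\<lambda>us. sng (reorder \<pi> us) 1) (cycAll ws)
      = smul (1 / of_nat (card ?C)) (\<Sum>ks\<in>?C. sng (reorder \<pi> (rotate_each ks ws)) (rotate_each_sign ks ws))"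
    by (simp add: cycAll_eq_average lin_smul lin_sum)
  also have "(\<Sum>ks\<in>?C. sng (reorder \<pi> (rotate_each ks ws)) (rotate_each_sign ks ws))
      = (\<Sum>ks\<in>?C. sng (rotate_each (reorder \<pi> ks) (reorder \<pi> ws)) (rotate_each_sign (reorder \<pi> ks) (reorder \<pi> ws)))"
    using \<pi> by (simp add: rotate_each_reorder rotate_each_sign_reorder)
  also have "\<dots> = (\<Sum>ks\<in>rot_choices (reorder \<pi> ws). sng (rotate_each ks (reorder \<pi> ws)) (rotate_each_sign ks (reorder \<pi> ws)))"
    by (rule sum.reindex_bij_betw[OF bij_betw_reorder_rot_choices[OF \<pi>]])
  finally show ?thesis
    using \<pi> by (simp add: cycAll_eq_average card_rot_choices_reorder)
qed

section \<open>Idempotence of the symmetrisation\<close>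

lemma symM_eq_average:
  "symM (a, ws) = smul (1 / of_nat (card (rot_choices ws \<times> perm_lists (length ws))))
     (\<Sum>(ks, \<pi>)\<in>rot_choices ws \<times> perm_lists (length ws).
        sng (a, reorder \<pi> (rotate_each ks ws)) (rotate_each_sign ks ws * koszul (map wp ws) \<pi>))"
proof -
  let ?C = "rot_choices ws" and ?P = "perm_lists (length ws)"
  have inner: "lin (\<lambda>us. sng (a, us) 1) (symS (rotate_each ks ws))
      = smul (1 / of_nat (card ?P)) (\<Sum>\<pi>\<in>?P. sng (a, reorder \<pi> (rotate_each ks ws)) (koszul (map wp ws) \<pi>))"
    for ks
    by (simp add: symS_eq_average lin_smul lin_sum)
  have "symM (a, ws) = lin (\<lambda>us. lin (\<lambda>us. sng (a, us) 1) (symS us)) (cycAll ws)"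
    by (simp add: lin_lin)
  also have "\<dots> = smul (1 / of_nat (card ?C * card ?P))
      (\<Sum>ks\<in>?C. \<Sum>\<pi>\<in>?P. sng (a, reorder \<pi> (rotate_each ks ws)) (rotate_each_sign ks ws * koszul (map wp ws) \<pi>))"
    by (simp add: cycAll_eq_average lin_smul lin_sum inner smul_sum mult.commute)
  finally show ?thesis
    by (simp add: card_cartesian_product sum.cartesian_product)
qed

lemma symM_rotate_each:
  "length ks = length ws \<Longrightarrow> symM (a, rotate_each ks ws) = smul (rotate_each_sign ks ws) (symM (a, ws))"
  by (simp add: cycAll_rotate_each lin_smul)

lemma symM_reorder:
  assumes \<pi>: "\<pi> \<in> perm_lists (length ws)"
  shows "symM (a, reorder \<pi> ws) = smul (koszul (map wp ws) \<pi>) (symM (a, ws))"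
proof -
  have "lin symS (cycAll (reorder \<pi> ws)) = lin (\<lambda>us. symS (reorder \<pi> us)) (cycAll ws)"
    by (simp add: cycAll_reorder[OF \<pi>] lin_lin)
  also have "\<dots> = lin (\<lambda>us. smul (koszul (map wp ws) \<pi>) (symS us)) (cycAll ws)"
  proof (rule lin_cong)
    fix us assume "us \<in> Poly_Mapping.keys (cycAll ws)"
    then obtain ks where "us = rotate_each ks ws"
      using keys_cycAll by blast
    then show "symS (reorder \<pi> us) = smul (koszul (map wp ws) \<pi>) (symS us)"
      using symS_reorder[of \<pi> us] \<pi> by simp
  qed
  finally show ?thesis
    by (simp add: lin_smul_fun lin_smul)
qed

text \<open>The signs attached to the terms of the average are exactly the signs by which
  the corresponding rearrangements act, and they square to one.\<close>
lemma symM_idem: "lin symM (symM m) = symM m"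
proof -
  obtain a ws where m: "m = (a, ws)"
    by fastforce
  let ?G = "rot_choices ws \<times> perm_lists (length ws)"
  show ?thesis
    unfolding m
  proof (rule lin_average_idem[where G = ?G and f = "\<lambda>(ks, \<pi>). (a, reorder \<pi> (rotate_each ks ws))"
        and s = "\<lambda>(ks, \<pi>). rotate_each_sign ks ws * koszul (map wp ws) \<pi>"])
    show "finite ?G" by simp
    show "?G \<noteq> {}"
      using replicate_zero_in_rot_choices upt_in_perm_lists by blast
    show "symM (a, ws) = smul (1 / of_nat (card ?G))
        (\<Sum>g\<in>?G. sng ((\<lambda>(ks, \<pi>). (a, reorder \<pi> (rotate_each ks ws))) g)
                     ((\<lambda>(ks, \<pi>). rotate_each_sign ks ws * koszul (map wp ws) \<pi>) g))"
      unfolding symM_eq_average by (simp add: split_def)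
  next
    fix g assume "g \<in> ?G"
    then obtain ks \<pi> where g: "g = (ks, \<pi>)" "ks \<in> rot_choices ws" "\<pi> \<in> perm_lists (length ws)"
      by blast
    then have "length ks = length ws"
      by (simp add: rot_choices_def)
    then have "symM (a, reorder \<pi> (rotate_each ks ws))
        = smul (koszul (map wp ws) \<pi>) (smul (rotate_each_sign ks ws) (symM (a, ws)))"
      using g symM_reorder[of \<pi> "rotate_each ks ws" a] by (simp only: symM_rotate_each map_wp_rotate_each length_rotate_each)
    with g show "symM ((\<lambda>(ks, \<pi>). (a, reorder \<pi> (rotate_each ks ws))) g)
        = smul ((\<lambda>(ks, \<pi>). rotate_each_sign ks ws * koszul (map wp ws) \<pi>) g) (symM (a, ws))"
      by (simp only: smul_smul mult.commute case_prod_conv)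
    show "(\<lambda>(ks, \<pi>). rotate_each_sign ks ws * koszul (map wp ws) \<pi>) g
        * (\<lambda>(ks, \<pi>). rotate_each_sign ks ws * koszul (map wp ws) \<pi>) g = 1"
      using rotate_each_sign_mult_self[of ks ws] koszul_mult_self[of "map wp ws" \<pi>]
      by (simp add: g algebra_simps)
  qed
qed

lemma Sym_idem: "Sym (Sym x) = Sym x"
  by (simp add: Sym_def lin_lin symM_idem)

lemma keys_symM:
  assumes "k \<in> Poly_Mapping.keys (symM (a, ws))"
  shows "\<exists>vs. k = (a, vs) \<and> mset (map mset vs) = mset (map mset ws)"
proof -
  from assms obtain ks \<pi> where "ks \<in> rot_choices ws" "\<pi> \<in> perm_lists (length ws)"
    and "k \<in> Poly_Mapping.keys (sng (a, reorder \<pi> (rotate_each ks ws)) (rotate_each_sign ks ws * koszul (map wp ws) \<pi>))"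
    unfolding symM_eq_average by (auto dest!: keys_sumD keys_smul[THEN subsetD])
  then have k: "k = (a, reorder \<pi> (rotate_each ks ws))"
    by (simp split: if_splits)
  have "mset (map mset (reorder \<pi> (rotate_each ks ws))) = mset (map mset (rotate_each ks ws))"
    by (rule mset_map_reorder) (simp add: \<open>\<pi> \<in> perm_lists (length ws)\<close>)
  also have "\<dots> = mset (map mset ws)"
    by (simp only: map_mset_rotate_each)
  finally show ?thesis
    using k by blast
qed

definition letters :: "word list \<Rightarrow> letter set" where
  "letters ws = (\<Union>w\<in>set ws. set w)"

text \<open>The monomials that survive in the quotient l'.\<close>
definition nonconstant :: "mono \<Rightarrow> bool" where
  "nonconstant m \<longleftrightarrow> (\<exists>w\<in>set (snd m). w \<noteq> [])"

lemma mset_map_length: "mset (map length ws) = image_mset size (mset (map mset ws))"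
  by (induction ws) auto

lemma allowedM_iff_mset_lengths:
  "allowedM (a, ws) \<longleftrightarrow> (let L = mset (map length ws); N = size (filter_mset (\<lambda>l. l \<noteq> 0) L) in
      (N = 1 \<and> ((\<exists>l\<in>#L. 2 \<le> l) \<or> 1 \<le> a + (size L - N))) \<or> 2 \<le> N)"
proof -
  let ?F = "filter (\<lambda>w. w \<noteq> []) ws"
  have len_F: "length ?F = size (filter_mset (\<lambda>l. l \<noteq> 0) (mset (map length ws)))"
    by (induction ws) auto
  have hd_F: "2 \<le> length (hd ?F) \<longleftrightarrow> (\<exists>l\<in>#mset (map length ws). 2 \<le> l)"
    if len1: "length ?F = 1"
  proof -
    obtain w0 ys where "?F = w0 # ys" "length ys = 0"
      using len1 unfolding One_nat_def length_Suc_conv by blast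
    then have w0: "?F = [w0]"
      by simp
    then have "w0 \<in> set ?F"
      by simp
    then have "w0 \<in> set ws"
      by simp
    moreover have "w = w0" if "w \<in> set ws" "w \<noteq> []" for w
    proof -
      from that have "w \<in> set ?F"
        by simp
      with w0 show ?thesis
        by simp
    qed
    ultimately show ?thesis
      using w0 by fastforce
  qed
  show ?thesis
    unfolding allowedM_def Let_def
    using hd_F size_filter_mset_lesseq[of "\<lambda>l. l \<noteq> 0" "mset (map length ws)"] by (auto simp: len_F)
qed

lemma same_shape_invariants:
  assumes "mset (map mset vs) = mset (map mset ws)"
  shows "letters vs = letters ws" "nonconstant (a, vs) \<longleftrightarrow> nonconstant (a, ws)"
    "allowedM (a, vs) \<longleftrightarrow> allowedM (a, ws)"
proof -
  have letters_mset: "letters xs = \<Union> (set_mset ` mset ` set xs)" for xs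
    by (auto simp: letters_def)
  have "mset ` set vs = mset ` set ws"
    using arg_cong[OF assms, of set_mset] by simp
  then show "letters vs = letters ws"
    by (simp only: letters_mset)
  have lengths: "mset (map length vs) = mset (map length ws)"
    using assms by (simp only: mset_map_length)
  have nonconstant_lengths: "nonconstant (a, xs) \<longleftrightarrow> (\<exists>l\<in>set (map length xs). l \<noteq> 0)" for xs
    by (auto simp: nonconstant_def)
  have "set (map length vs) = set (map length ws)"
    using arg_cong[OF lengths, of set_mset] by (simp only: set_mset_mset)
  then show "nonconstant (a, vs) \<longleftrightarrow> nonconstant (a, ws)"
    by (simp only: nonconstant_lengths)
  show "allowedM (a, vs) \<longleftrightarrow> allowedM (a, ws)"
    unfolding allowedM_iff_mset_lengths lengths ..
qed

lemma keys_symM_invariants: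
  assumes "k \<in> Poly_Mapping.keys (symM m)"
  shows "letters (snd k) = letters (snd m)" "nonconstant k \<longleftrightarrow> nonconstant m" "allowedM k \<longleftrightarrow> allowedM m"
proof -
  obtain a ws where m: "m = (a, ws)"
    by fastforce
  from assms have "k \<in> Poly_Mapping.keys (symM (a, ws))"
    by (simp only: m)
  then obtain vs where k: "k = (a, vs)" and shape: "mset (map mset vs) = mset (map mset ws)"
    using keys_symM by blast
  show "letters (snd k) = letters (snd m)" "nonconstant k \<longleftrightarrow> nonconstant m" "allowedM k \<longleftrightarrow> allowedM m"
    unfolding k m using same_shape_invariants[OF shape] by simp_all
qed

lemma keys_Sym: "k \<in> Poly_Mapping.keys (Sym x) \<Longrightarrow> \<exists>m\<in>Poly_Mapping.keys x. k \<in> Poly_Mapping.keys (symM m)"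
  using keys_lin[of symM x] unfolding Sym_def by blast

section \<open>The quotient map to l'\<close>

lemma prjL_eq_lin: "prjL x = lin (\<lambda>m. if nonconstant m then sng m 1 else 0) x"
  unfolding prjL_def nonconstant_def by (rule lin_cong) (auto split: prod.splits)

lemma lookup_prjL: "Poly_Mapping.lookup (prjL x) k = (if nonconstant k then Poly_Mapping.lookup x k else 0)"
proof -
  have "Poly_Mapping.lookup (prjL x) k = (\<Sum>k'\<in>Poly_Mapping.keys x.
      if k' = k \<and> nonconstant k then Poly_Mapping.lookup x k' else 0)"
    unfolding prjL_eq_lin lookup_lin by (rule sum.cong) (auto simp: lookup_single when_def)
  then show ?thesis
    by (auto simp: sum.delta in_keys_iff)
qed

lemma keys_prjL: "Poly_Mapping.keys (prjL x) = {k \<in> Poly_Mapping.keys x. nonconstant k}"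
  by (auto simp: in_keys_iff lookup_prjL split: if_splits)

lemma prjL_symM: "prjL (symM m) = (if nonconstant m then symM m else 0)"
proof (rule poly_mapping_eqI)
  fix k
  show "Poly_Mapping.lookup (prjL (symM m)) k = Poly_Mapping.lookup (if nonconstant m then symM m else 0) k"
  proof (cases "k \<in> Poly_Mapping.keys (symM m)")
    case True
    then show ?thesis
      using keys_symM_invariants(2) by (simp add: lookup_prjL)
  next
    case False
    then show ?thesis
      by (simp add: lookup_prjL in_keys_iff)
  qed
qed

text \<open>Both composites send a monomial m to symM m or to 0, according to whether m is
  nonconstant, because symmetrisation does not change that property.\<close>
lemma Sym_prjL: "Sym (prjL x) = prjL (Sym x)"
proof -
  let ?R = "\<lambda>m. if nonconstant m then sng m (1::rat) else 0"
  have "Sym (prjL x) = lin (\<lambda>m. lin symM (?R m)) x"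
    by (simp only: Sym_def prjL_eq_lin lin_lin)
  also have "\<dots> = lin (\<lambda>m. lin ?R (symM m)) x"
    by (rule lin_cong) (simp add: prjL_eq_lin[symmetric] prjL_symM)
  also have "\<dots> = prjL (Sym x)"
    by (simp only: Sym_def prjL_eq_lin lin_lin)
  finally show ?thesis .
qed

lemma Lam_prjL_Sym:
  assumes letters_bound: "\<And>m. m \<in> Poly_Mapping.keys w \<Longrightarrow> letters (snd m) \<subseteq> {c. lidx c < n}"
    and allowed: "\<And>m. m \<in> Poly_Mapping.keys w \<Longrightarrow> nonconstant m \<Longrightarrow> allowedM m"
  shows "Lam n (prjL (Sym w))"
proof -
  have keys: "\<exists>m\<in>Poly_Mapping.keys w. letters (snd k) = letters (snd m) \<and> nonconstant m \<and> allowedM k = allowedM m"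
    if "k \<in> Poly_Mapping.keys (prjL (Sym w))" for k
  proof -
    from that have "k \<in> Poly_Mapping.keys (Sym w)" "nonconstant k"
      by (auto simp: keys_prjL)
    moreover from this obtain m where "m \<in> Poly_Mapping.keys w" and km: "k \<in> Poly_Mapping.keys (symM m)"
      using keys_Sym by blast
    ultimately show ?thesis
      using keys_symM_invariants[OF km] by blast
  qed
  have "Sym (prjL (Sym w)) = prjL (Sym w)"
    by (simp add: Sym_prjL Sym_idem)
  moreover have "\<forall>(a, ws)\<in>Poly_Mapping.keys (prjL (Sym w)). \<forall>v\<in>set ws. \<forall>c\<in>set v. lidx c < n"
  proof (intro ballI, clarify)
    fix a ws v c assume "(a, ws) \<in> Poly_Mapping.keys (prjL (Sym w))" "v \<in> set ws" "c \<in> set v"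
    then show "lidx c < n"
      using keys letters_bound by (fastforce simp: letters_def)
  qed
  moreover have "\<forall>k\<in>Poly_Mapping.keys (prjL (Sym w)). allowedM k"
    using keys allowed by blast
  ultimately show ?thesis
    unfolding Lam_def inL_def by blast
qed

section \<open>Support of the bracket and of the differential\<close>

lemma keys_linD: "k \<in> Poly_Mapping.keys (lin f x) \<Longrightarrow> \<exists>u\<in>Poly_Mapping.keys x. k \<in> Poly_Mapping.keys (f u)"
  using keys_lin[of f x] by blast

lemma keys_addD: "k \<in> Poly_Mapping.keys (a + b) \<Longrightarrow> k \<in> Poly_Mapping.keys a \<or> k \<in> Poly_Mapping.keys b"
  using keys_add[of a b] by blast

lemma keys_single_eq: "k \<in> Poly_Mapping.keys (sng a c) \<Longrightarrow> k = a"
  by (simp split: if_splits)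

lemma keys_double_sum_single:
  "k \<in> Poly_Mapping.keys (\<Sum>i\<in>I. \<Sum>j\<in>J i. sng (f i j) (c i j)) \<Longrightarrow> \<exists>i\<in>I. \<exists>j\<in>J i. k = f i j"
  by (blast dest: keys_sumD keys_single_eq)

lemma keys_sum_lin_single:
  "k \<in> Poly_Mapping.keys (\<Sum>i\<in>I. lin (\<lambda>u. sng (f i u) (c i u)) (B i))
   \<Longrightarrow> \<exists>i\<in>I. \<exists>u\<in>Poly_Mapping.keys (B i). k = f i u"
  by (blast dest: keys_sumD keys_linD keys_single_eq)

lemma keys_double_sum_lin_single:
  "k \<in> Poly_Mapping.keys (\<Sum>i\<in>I. \<Sum>j\<in>J i. lin (\<lambda>u. sng (f i j u) (c i j u)) (B i j))
   \<Longrightarrow> \<exists>i\<in>I. \<exists>j\<in>J i. \<exists>u\<in>Poly_Mapping.keys (B i j). k = f i j u"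
  by (blast dest: keys_sumD keys_linD keys_single_eq)

lemma keys_brw:
  assumes "u \<in> Poly_Mapping.keys (brw x y)"
  shows "x \<noteq> [] \<and> y \<noteq> [] \<and> length u = length x + length y - 2 \<and> set u \<subseteq> set x \<union> set y"
proof -
  from assms obtain i j where "i < length x" "j < length y"
    and u: "u = drop (Suc i) x @ take i x @ drop (Suc j) y @ take j y"
    unfolding brw_def Let_def by (auto dest!: keys_double_sum_single)
  then show ?thesis
    by (auto dest!: set_take_subset[THEN subsetD] set_drop_subset[THEN subsetD])
qed

lemma keys_cobw:
  assumes "us \<in> Poly_Mapping.keys (cobw w)"
  shows "length us = 2 \<and> (\<forall>v\<in>set us. set v \<subseteq> set w)"
  using keys_double_sum_single[OF assms[unfolded cobw_def Let_def]]
  by (auto dest!: set_take_subset[THEN subsetD] set_drop_subset[THEN subsetD])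

lemma length_rm_idx_single: "i < length xs \<Longrightarrow> length (rm_idx {i} xs) = length xs - 1"
proof -
  assume "i < length xs"
  have "length (rm_idx {i} xs) = card (set (filter (\<lambda>t. t \<notin> {i}) [0..<length xs]))"
    unfolding rm_idx_def length_map by (rule distinct_card[symmetric]) simp
  also have "set (filter (\<lambda>t. t \<notin> {i}) [0..<length xs]) = {..<length xs} - {i}"
    by auto
  finally show ?thesis
    using \<open>i < length xs\<close> by simp
qed

lemma letters_Cons: "letters (w # ws) = set w \<union> letters ws"
  by (simp add: letters_def)

lemma letters_append: "letters (xs @ ys) = letters xs \<union> letters ys"
  by (simp add: letters_def)

lemma letters_rm_idx: "letters (rm_idx S xs) \<subseteq> letters xs"
proof -
  have "set (rm_idx S xs) \<subseteq> set xs"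
    by (auto simp: rm_idx_def)
  then show ?thesis
    by (auto simp: letters_def)
qed

lemma set_nth_subset_letters: "i < length xs \<Longrightarrow> set (xs ! i) \<subseteq> letters xs"
  by (auto simp: letters_def intro!: bexI[of _ "xs ! i"])

lemma keys_brm:
  assumes "m \<in> Poly_Mapping.keys (brm (a, gs) (b, hs))"
  shows "\<exists>i<length gs. \<exists>j<length hs. \<exists>u\<in>Poly_Mapping.keys (brw (gs ! i) (hs ! j)).
           m = (a + b, u # rm_idx {i} gs @ rm_idx {j} hs)"
  using keys_double_sum_lin_single[OF assms[unfolded brm.simps Let_def]] by auto

lemma keys_deltam:
  assumes "m \<in> Poly_Mapping.keys (deltam (a, gs))"
  shows "\<exists>j<length gs. \<exists>i<j. \<exists>u\<in>Poly_Mapping.keys (brw (gs ! i) (gs ! j)).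
           m = (Suc a, u # rm_idx {i, j} gs)"
  using keys_double_sum_lin_single[OF assms[unfolded deltam.simps Let_def]] by auto

lemma keys_cobm:
  assumes "m \<in> Poly_Mapping.keys (cobm (a, gs))"
  shows "\<exists>i<length gs. \<exists>us\<in>Poly_Mapping.keys (cobw (gs ! i)). m = (a, us @ rm_idx {i} gs)"
  using keys_sum_lin_single[OF assms[unfolded cobm.simps Let_def]] by auto

lemma letters_keys_brm:
  assumes "m \<in> Poly_Mapping.keys (brm (a, gs) (b, hs))"
  shows "letters (snd m) \<subseteq> letters gs \<union> letters hs"
proof -
  obtain i j u where ij: "i < length gs" "j < length hs" "u \<in> Poly_Mapping.keys (brw (gs ! i) (hs ! j))"
    and m: "m = (a + b, u # rm_idx {i} gs @ rm_idx {j} hs)"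
    using keys_brm[OF assms] by blast
  show ?thesis
    using keys_brw[OF ij(3)] set_nth_subset_letters[OF ij(1)] set_nth_subset_letters[OF ij(2)]
      letters_rm_idx[of "{i}" gs] letters_rm_idx[of "{j}" hs]
    by (auto simp: m letters_Cons letters_append)
qed

lemma letters_keys_deltam:
  assumes "m \<in> Poly_Mapping.keys (deltam (a, gs))"
  shows "letters (snd m) \<subseteq> letters gs"
proof -
  obtain i j u where ij: "j < length gs" "i < j" "u \<in> Poly_Mapping.keys (brw (gs ! i) (gs ! j))"
    and m: "m = (Suc a, u # rm_idx {i, j} gs)"
    using keys_deltam[OF assms] by blast
  have "i < length gs"
    using ij(1,2) by simp
  then show ?thesis
    using keys_brw[OF ij(3)] set_nth_subset_letters[of i gs] set_nth_subset_letters[OF ij(1)]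
      letters_rm_idx[of "{i, j}" gs]
    by (auto simp: m letters_Cons)
qed

lemma letters_keys_cobm:
  assumes "m \<in> Poly_Mapping.keys (cobm (a, gs))"
  shows "letters (snd m) \<subseteq> letters gs"
proof -
  obtain i us where i: "i < length gs" "us \<in> Poly_Mapping.keys (cobw (gs ! i))"
    and m: "m = (a, us @ rm_idx {i} gs)"
    using keys_cobm[OF assms] by blast
  have "letters us \<subseteq> letters gs"
    using keys_cobw[OF i(2)] set_nth_subset_letters[OF i(1)] by (auto simp: letters_def)
  then show ?thesis
    using letters_rm_idx[of "{i}" gs] by (auto simp: m letters_append)
qed

text \<open>The only nonconstant monomials outside \<Lambda> are the bare letters of V^*: this is the
  factor Q_+[gamma, nu] in front of V^*.\<close>
lemma allowedM_iff:
  assumes "nonconstant (c, ws)"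
  shows "allowedM (c, ws) \<longleftrightarrow> \<not> (c = 0 \<and> length ws = 1 \<and> length (hd ws) < 2)"
proof -
  let ?F = "filter (\<lambda>w. w \<noteq> []) ws"
  have "?F \<noteq> []"
    using assms by (auto simp: nonconstant_def filter_empty_conv)
  have "length ?F \<le> length ws"
    by simp
  show ?thesis
  proof (cases "length ?F = 1")
    case False
    moreover have "length ?F \<noteq> 0"
      using \<open>?F \<noteq> []\<close> by simp
    ultimately have "2 \<le> length ?F"
      by linarith
    moreover from this have "length ws \<noteq> 1"
      using \<open>length ?F \<le> length ws\<close> by linarith
    ultimately show ?thesis
      by (simp add: allowedM_def Let_def)
  next
    case True
    then obtain w0 ys where "?F = w0 # ys" "length ys = 0"
      unfolding One_nat_def length_Suc_conv by blast
    then have F: "?F = [w0]"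
      by simp
    show ?thesis
    proof (cases "length ws = 1")
      case True
      then obtain w where "ws = [w]"
        unfolding One_nat_def length_Suc_conv by auto
      with F show ?thesis
        by (auto simp: allowedM_def Let_def split: if_splits)
    next
      case False
      with F \<open>length ?F \<le> length ws\<close> show ?thesis
        by (auto simp: allowedM_def Let_def)
    qed
  qed
qed

lemma allowedM_single_word: "allowedM (0, [w]) \<Longrightarrow> w \<noteq> [] \<Longrightarrow> 2 \<le> length w"
  by (simp add: allowedM_def)

lemma allowedM_keys_brm:
  assumes m: "m \<in> Poly_Mapping.keys (brm (a, gs) (b, hs))"
    and allowed: "allowedM (a, gs)" "allowedM (b, hs)" and "nonconstant m"
  shows "allowedM m"
proof (rule ccontr)
  assume "\<not> allowedM m"
  obtain i j u where ij: "i < length gs" "j < length hs" "u \<in> Poly_Mapping.keys (brw (gs ! i) (hs ! j))"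
    and m: "m = (a + b, u # rm_idx {i} gs @ rm_idx {j} hs)"
    using keys_brm[OF assms(1)] by blast
  from \<open>\<not> allowedM m\<close> \<open>nonconstant m\<close> have "a + b = 0" and single: "rm_idx {i} gs @ rm_idx {j} hs = []"
    and "length u < 2"
    by (simp_all add: m allowedM_iff)
  have "length gs = 1" "length hs = 1"
    using single length_rm_idx_single[OF ij(1)] length_rm_idx_single[OF ij(2)] ij(1,2) by auto
  then have "gs = [gs ! i]" "hs = [hs ! j]"
    using ij(1,2) by (auto simp: length_Suc_conv)
  moreover have "gs ! i \<noteq> []" "hs ! j \<noteq> []" "length u = length (gs ! i) + length (hs ! j) - 2"
    using keys_brw[OF ij(3)] by auto
  ultimately have "2 \<le> length (gs ! i)" "2 \<le> length (hs ! j)"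
    using allowed \<open>a + b = 0\<close> allowedM_single_word[of "gs ! i"] allowedM_single_word[of "hs ! j"]
    by (metis add_is_0)+
  with \<open>length u = _\<close> \<open>length u < 2\<close> show False
    by simp
qed

lemma allowedM_keys_deltam:
  assumes "m \<in> Poly_Mapping.keys (deltam (a, gs))" and "nonconstant m"
  shows "allowedM m"
  using keys_deltam[OF assms(1)] assms(2) allowedM_iff by auto

lemma allowedM_keys_cobm:
  assumes "m \<in> Poly_Mapping.keys (cobm (a, gs))" and "nonconstant m"
  shows "allowedM m"
proof -
  obtain i us where i: "i < length gs" "us \<in> Poly_Mapping.keys (cobw (gs ! i))"
    and m: "m = (a, us @ rm_idx {i} gs)"
    using keys_cobm[OF assms(1)] by blast
  then have "length (snd m) \<noteq> 1"
    using keys_cobw[OF i(2)] by simp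
  then show ?thesis
    using assms(2) allowedM_iff[of a "us @ rm_idx {i} gs"] by (simp add: m)
qed

theorem theorem3p5:
  fixes n :: nat and x y :: "mono \<Rightarrow>\<^sub>0 rat"
  assumes "Lam n x" and "Lam n y"
  shows "Lam n (prjL (brl x y)) \<and> Lam n (prjL (dl x))"
proof -
  have x: "letters gs \<subseteq> {c. lidx c < n}" "allowedM (a, gs)" if "(a, gs) \<in> Poly_Mapping.keys x" for a gs
    using assms(1) that by (fastforce simp: Lam_def inL_def letters_def)+
  have y: "letters hs \<subseteq> {c. lidx c < n}" "allowedM (b, hs)" if "(b, hs) \<in> Poly_Mapping.keys y" for b hs
    using assms(2) that by (fastforce simp: Lam_def inL_def letters_def)+
  have "Lam n (prjL (Sym (lin2 brm x y)))"
  proof (rule Lam_prjL_Sym)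
    fix m assume "m \<in> Poly_Mapping.keys (lin2 brm x y)"
    then obtain a gs b hs where "(a, gs) \<in> Poly_Mapping.keys x" "(b, hs) \<in> Poly_Mapping.keys y"
      and m: "m \<in> Poly_Mapping.keys (brm (a, gs) (b, hs))"
      unfolding lin2_eq_lin by (fastforce dest: keys_linD)
    with x y show "letters (snd m) \<subseteq> {c. lidx c < n}" "nonconstant m \<Longrightarrow> allowedM m"
      using letters_keys_brm[OF m] allowedM_keys_brm[OF m] by blast+
  qed
  moreover have "Lam n (prjL (Sym (lin (\<lambda>m. deltam m + cobm m) x)))"
  proof (rule Lam_prjL_Sym)
    fix m assume "m \<in> Poly_Mapping.keys (lin (\<lambda>m. deltam m + cobm m) x)"
    then obtain a gs where "(a, gs) \<in> Poly_Mapping.keys x"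
      and m: "m \<in> Poly_Mapping.keys (deltam (a, gs)) \<or> m \<in> Poly_Mapping.keys (cobm (a, gs))"
      by (fastforce dest: keys_linD keys_addD)
    with x show "letters (snd m) \<subseteq> {c. lidx c < n}" "nonconstant m \<Longrightarrow> allowedM m"
      using letters_keys_deltam letters_keys_cobm allowedM_keys_deltam allowedM_keys_cobm by blast+
  qed
  ultimately show ?thesis
    by (simp add: brl_def dl_def)
qed

end
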